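(* Fix $\epsilon>0$ and define \[U_1:=\left\{(a,b)\in\bigl([0,1/2)\times[1/2,1)\bigr)\cup\bigl([1/2,1)\times[0,1/2)\bigr):\ a+b<\tfrac34\right\},\] \[U_2:=\left\{(a,b)\in[0,1/2)\times[0,1):\ \tfrac34+\epsilon<a+b<\tfrac54\right\},\] $U:=U_1\cup U_2$ and $S_\epsilon:=\pi(U)\subset\mathbb{T}^2$. Let $\theta_x,\theta_z\in S_\epsilon$ and $\theta_y\in\mathbb{T}^2$ satisfy $2\theta_y=\theta_x+\theta_z$, and write $d:=\frac{\pi^{-1}(\theta_z)-\pi^{-1}(\theta_x)}{2}\in\mathbb{R}^2$. If $|d_1+d_2|\le\epsilon/1000$, then \[(1-\{p(\theta_x)\})^2+(1-\{p(\theta_z)\})^2-2(1-\{p(\theta_y)\})^2\ge 2d_1^2.\]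
   Context: $\mathbb{T}^2:=(\mathbb{R}/\mathbb{Z})^2$. $\pi:\mathbb{R}^2\to\mathbb{T}^2$, $x\mapsto x+\mathbb{Z}^2$, and for $\theta\in\mathbb{T}^2$, $\pi^{-1}(\theta)$ denotes the unique $x\in[0,1)^2$ with $\pi(x)=\theta$. The projection $p:\mathbb{T}^2\to[0,1)$ is $p(\theta)=\pi^{-1}(\theta)_1$. For $x\in[0,1)$, $\{x\}:=x$ if $x\in[0,1/2)$ and $\{x\}:=x-1/2$ otherwise (this is not the usual fractional part). *)

theory Defs
  imports Complex_Main
begin

text \<open>The torus T^2 = (R/Z)^2 is modelled by its fundamental domain [0,1)^2:
  a point of the torus is identified with its unique representative in [0,1)^2.
  Under this model pi^{-1} is the identity on representatives.\<close>

definition T2 :: "(real \<times> real) set" where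
  "T2 = {0..<1} \<times> {0..<1}"

definition tpi :: "real \<times> real \<Rightarrow> real \<times> real" where
  "tpi x = (frac (fst x), frac (snd x))"

definition tinv :: "real \<times> real \<Rightarrow> real \<times> real" where
  "tinv \<theta> = \<theta>"

definition tadd :: "real \<times> real \<Rightarrow> real \<times> real \<Rightarrow> real \<times> real" where
  "tadd \<theta> \<eta> = tpi (fst \<theta> + fst \<eta>, snd \<theta> + snd \<eta>)"

definition tp :: "real \<times> real \<Rightarrow> real" where
  "tp \<theta> = fst (tinv \<theta>)"

definition brace :: "real \<Rightarrow> real" where
  "brace x = (if x < 1/2 then x else x - 1/2)"

definition U1 :: "(real \<times> real) set" where
  "U1 = {(a,b). (a,b) \<in> ({0..<1/2} \<times> {1/2..<1}) \<union> ({1/2..<1} \<times> {0..<1/2}) \<and> a + b < 3/4}"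

definition U2 :: "real \<Rightarrow> (real \<times> real) set" where
  "U2 \<epsilon> = {(a,b). (a,b) \<in> {0..<1/2} \<times> {0..<1} \<and> 3/4 + \<epsilon> < a + b \<and> a + b < 5/4}"

definition Seps :: "real \<Rightarrow> (real \<times> real) set" where
  "Seps \<epsilon> = tpi ` (U1 \<union> U2 \<epsilon>)"

end

theory Submission
  imports Defs
begin

(* On [0,1) the bracket is doubling mod 1 followed by halving, brace y = frac (2 y) / 2, so
   2 \<theta>y = \<theta>x + \<theta>z determines brace (p \<theta>y) = frac (x + z) / 2, where x, z are the first
   coordinates of \<theta>x, \<theta>z; let a, c be their brackets.  Coordinate sums on U1 and on U2 are
   more than \<epsilon> apart, so the smallness of d1 + d2 puts \<theta>x and \<theta>z in the same piece: in U2
   both x, z lie in [0,1/2), in U1 both a, c are below 1/4.  If x and z lie in the same half of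
   [0,1), then brace (p \<theta>y) = (a + c)/2 and the left-hand side is exactly 2 d1^2 (t \<mapsto> (1 - t)^2
   is quadratic); otherwise a + c < 1/2, the midpoint is shifted by 1/4, and the surplus is
   3/4 minus the bracket of the point in the upper half. *)

lemma tpi_eq_self: "u \<in> T2 \<Longrightarrow> tpi u = u"
  by (cases u) (auto simp: tpi_def T2_def frac_eq)

lemma Seps_eq: "Seps \<epsilon> = U1 \<union> U2 \<epsilon>"
proof -
  have "U1 \<union> U2 \<epsilon> \<subseteq> T2" by (auto simp: U1_def U2_def T2_def)
  then show ?thesis by (force simp: Seps_def tpi_eq_self)
qed

lemma brace_eq_half_frac_double:
  assumes "0 \<le> y" "y < 1"
  shows "brace y = frac (2 * y) / 2"
proof (cases "y < 1/2")
  case True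
  then show ?thesis using assms by (simp add: brace_def frac_eq)
next
  case False
  then have "frac (2 * y) = 2 * y - 1"
    using assms frac_1_eq[of "2 * y - 1"] by (simp add: frac_eq)
  then show ?thesis using False by (simp add: brace_def)
qed

lemma brace_lt_quarter_if_U1: "(a, b) \<in> U1 \<Longrightarrow> brace a < 1/4"
  by (auto simp: U1_def brace_def)

lemma fst_lt_half_if_U2: "(a, b) \<in> U2 \<epsilon> \<Longrightarrow> a < 1/2"
  by (simp add: U2_def)

lemma U1_U2_sum_gap: "(a, b) \<in> U1 \<Longrightarrow> (a', b') \<in> U2 \<epsilon> \<Longrightarrow> a + b + \<epsilon> < a' + b'"
  by (auto simp: U1_def U2_def)

lemma same_half_or_small_braces:
  assumes "(x1, x2) \<in> U1 \<union> U2 \<epsilon>" "(z1, z2) \<in> U1 \<union> U2 \<epsilon>"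
    and "\<bar>(z1 + z2) - (x1 + x2)\<bar> \<le> \<epsilon>"
  shows "(x1 < 1/2 \<longleftrightarrow> z1 < 1/2) \<or> brace x1 + brace z1 < 1/2"
proof -
  have "(x1, x2) \<in> U1 \<and> (z1, z2) \<in> U1 \<or> (x1, x2) \<in> U2 \<epsilon> \<and> (z1, z2) \<in> U2 \<epsilon>"
    using assms U1_U2_sum_gap[of x1 x2 z1 z2 \<epsilon>] U1_U2_sum_gap[of z1 z2 x1 x2 \<epsilon>] by auto
  then show ?thesis
  proof
    assume "(x1, x2) \<in> U1 \<and> (z1, z2) \<in> U1"
    then have "brace x1 < 1/4" "brace z1 < 1/4"
      using brace_lt_quarter_if_U1 by blast+
    then show ?thesis by simp
  next
    assume "(x1, x2) \<in> U2 \<epsilon> \<and> (z1, z2) \<in> U2 \<epsilon>"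
    then have "x1 < 1/2" "z1 < 1/2"
      using fst_lt_half_if_U2 by blast+
    then show ?thesis by simp
  qed
qed

lemma midpoint_defect_same_half:
  fixes a c :: real
  shows "(1 - a)^2 + (1 - c)^2 - 2 * (1 - (a + c) / 2)^2 = 2 * ((c - a) / 2)^2"
  by (simp add: power2_eq_square field_simps)

lemma midpoint_defect_shifted:
  fixes a c :: real
  shows "(1 - a)^2 + (1 - c)^2 - 2 * (1 - ((a + c) / 2 + 1/4))^2
           = 2 * ((1/2 + c - a) / 2)^2 + (3/4 - c)"
  by (simp add: power2_eq_square field_simps)

lemma brace_midpoint_inequality:
  fixes x z y :: real
  assumes "0 \<le> x" "x < 1" "0 \<le> z" "z < 1"
    and y: "brace y = frac (x + z) / 2"
    and halves: "(x < 1/2 \<longleftrightarrow> z < 1/2) \<or> brace x + brace z < 1/2"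
  shows "(1 - brace x)^2 + (1 - brace z)^2 - 2 * (1 - brace y)^2 \<ge> 2 * ((z - x) / 2)^2"
proof -
  consider "x < 1/2 \<longleftrightarrow> z < 1/2" | "x < 1/2" "1/2 \<le> z" "x + z < 1"
    | "1/2 \<le> x" "z < 1/2" "x + z < 1"
    using halves by (auto simp: brace_def split: if_splits)
  then show ?thesis
  proof cases
    case 1
    have "frac (x + z) = brace x + brace z"
      using 1 assms frac_1_eq[of "x + z - 1"] by (auto simp: brace_def frac_eq)
    then have mid: "brace y = (brace x + brace z) / 2"
      using y by simp
    have diff: "z - x = brace z - brace x"
      using 1 by (auto simp: brace_def)
    show ?thesis
      using midpoint_defect_same_half[of "brace x" "brace z", folded mid diff] by linarith
  next
    case 2
    then have "brace y = (x + z) / 2"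
      using assms y by (simp add: frac_eq)
    also have "\<dots> = (brace x + brace z) / 2 + 1/4"
      using 2 by (simp add: brace_def field_simps)
    finally have mid: "brace y = (brace x + brace z) / 2 + 1/4" .
    have diff: "z - x = 1/2 + brace z - brace x" and "brace z < 1/2"
      using 2 assms by (simp_all add: brace_def)
    then show ?thesis
      using midpoint_defect_shifted[of "brace x" "brace z", folded mid diff] by linarith
  next
    case 3
    then have "brace y = (x + z) / 2"
      using assms y by (simp add: frac_eq)
    also have "\<dots> = (brace z + brace x) / 2 + 1/4"
      using 3 by (simp add: brace_def field_simps)
    finally have mid: "brace y = (brace z + brace x) / 2 + 1/4" .
    have diff: "((z - x) / 2)^2 = ((1/2 + brace x - brace z) / 2)^2" and "brace x < 1/2"
      using 3 assms by (simp_all add: brace_def power2_eq_square field_simps)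
    then show ?thesis
      using midpoint_defect_shifted[of "brace z" "brace x", folded mid diff] by linarith
  qed
qed

theorem proposition4p4:
  fixes \<epsilon> :: real and \<theta>x \<theta>y \<theta>z :: "real \<times> real"
  assumes "\<epsilon> > 0"
    and "\<theta>x \<in> Seps \<epsilon>" and "\<theta>z \<in> Seps \<epsilon>" and "\<theta>y \<in> T2"
    and "tadd \<theta>y \<theta>y = tadd \<theta>x \<theta>z"
    and "\<bar>(fst (tinv \<theta>z) - fst (tinv \<theta>x)) / 2 + (snd (tinv \<theta>z) - snd (tinv \<theta>x)) / 2\<bar> \<le> \<epsilon> / 1000"
  shows "(1 - brace (tp \<theta>x))^2 + (1 - brace (tp \<theta>z))^2 - 2 * (1 - brace (tp \<theta>y))^2
           \<ge> 2 * ((fst (tinv \<theta>z) - fst (tinv \<theta>x)) / 2)^2"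
proof -
  obtain x1 x2 z1 z2 y1 y2 where
    \<theta>: "\<theta>x = (x1, x2)" "\<theta>z = (z1, z2)" "\<theta>y = (y1, y2)"
    by (cases \<theta>x, cases \<theta>z, cases \<theta>y)
  have x: "(x1, x2) \<in> U1 \<union> U2 \<epsilon>" and z: "(z1, z2) \<in> U1 \<union> U2 \<epsilon>"
    using assms(2,3) \<theta> by (simp_all add: Seps_eq)
  have bounds: "0 \<le> x1" "x1 < 1" "0 \<le> z1" "z1 < 1"
    using x z by (auto simp: U1_def U2_def)
  have "frac (y1 + y1) = frac (x1 + z1)"
    using assms(5) \<theta> by (simp add: tadd_def tpi_def)
  then have mid: "brace y1 = frac (x1 + z1) / 2"
    using assms(4) \<theta> brace_eq_half_frac_double[of y1, unfolded mult_2] by (simp add: T2_def)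
  have "\<bar>(z1 - x1) / 2 + (z2 - x2) / 2\<bar> \<le> \<epsilon> / 1000"
    using assms(6) by (simp only: \<theta> tinv_def fst_conv snd_conv)
  then have "\<bar>(z1 + z2) - (x1 + x2)\<bar> \<le> \<epsilon>"
    using assms(1) unfolding abs_le_iff by (auto simp: field_simps)
  then have "(x1 < 1/2 \<longleftrightarrow> z1 < 1/2) \<or> brace x1 + brace z1 < 1/2"
    using same_half_or_small_braces[OF x z] by blast
  then show ?thesis
    using brace_midpoint_inequality[OF bounds mid] \<theta> by (simp add: tp_def tinv_def)
qed

end
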